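(* Let $U$ be a supertropical monoid and $E$ a TE-relation on $U$. Then the set $U/E$ of $E$-equivalence classes carries a unique structure of a supertropical monoid such that the map $\pi_E:U\to U/E$, $x\mapsto[x]_E$, is a transmission.
   Context: A supertropical monoid is a monoid $(U,\cdot)$ with absorbing element $0$ and a distinguished central idempotent $e$ with $ex=0\Rightarrow x=0$, together with a total ordering on $M:=eU$, compatible with multiplication and with $0$ least, making $M$ a bipotent semiring (addition $=\max$). A transmission $\alpha:U\to V$ is a map with $\alpha(0)=0$, $\alpha(1)=1$, $\alpha(xy)=\alpha(x)\alpha(y)$, $\alpha(e_U)=e_V$, and $x\le y\Rightarrow\alpha(x)\le\alpha(y)$ for $x,y\in eU$. An equivalence relation $E$ on $U$ is a TE-relation if: (TE1) it is multiplicative: $x\sim_E y\Rightarrow xz\sim_E yz$ and $zx\sim_E zy$; (TE2) its restriction to $M$ is order compatible: if $x_1,x_2,x_3,x_4\in M$ with $x_1\le x_2$, $x_3\le x_4$, $x_1\sim_E x_4$, $x_2\sim_E x_3$, then $x_1\sim_E x_2$; (TE3) if $x\in U$ and $ex\sim_E 0$, then $x\sim_E 0$. *)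

theory Defs
  imports Main
begin

text \<open>A monoid with absorbing zero, given on an explicit carrier set.
  st_e is the distinguished central idempotent e, st_le the ordering
  (only relevant on the ghost ideal M = eU).\<close>

record 'a stmonoid =
  st_carrier :: "'a set"
  st_mul :: "'a \<Rightarrow> 'a \<Rightarrow> 'a"
  st_one :: 'a
  st_zero :: 'a
  st_e :: 'a
  st_le :: "'a \<Rightarrow> 'a \<Rightarrow> bool"

definition ghost_set :: "('a, 'b) stmonoid_scheme \<Rightarrow> 'a set" where
  "ghost_set S = {st_mul S (st_e S) x | x. x \<in> st_carrier S}"

definition supertropical_monoid :: "('a, 'b) stmonoid_scheme \<Rightarrow> bool" where
  "supertropical_monoid S \<longleftrightarrow>
     (let U = st_carrier S; m = st_mul S; e = st_e S; z = st_zero S;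
          le = st_le S; M = ghost_set S in
       \<comment> \<open>monoid\<close>
       st_one S \<in> U \<and> z \<in> U \<and> e \<in> U \<and>
       (\<forall>x\<in>U. \<forall>y\<in>U. m x y \<in> U) \<and>
       (\<forall>x\<in>U. \<forall>y\<in>U. \<forall>w\<in>U. m (m x y) w = m x (m y w)) \<and>
       (\<forall>x\<in>U. m (st_one S) x = x \<and> m x (st_one S) = x) \<and>
       \<comment> \<open>absorbing zero\<close>
       (\<forall>x\<in>U. m z x = z \<and> m x z = z) \<and>
       \<comment> \<open>central idempotent e with ex = 0 implies x = 0\<close>
       (\<forall>x\<in>U. m e x = m x e) \<and> m e e = e \<and>
       (\<forall>x\<in>U. m e x = z \<longrightarrow> x = z) \<and>
       \<comment> \<open>total ordering on M = eU\<close>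
       (\<forall>x\<in>M. le x x) \<and>
       (\<forall>x\<in>M. \<forall>y\<in>M. le x y \<and> le y x \<longrightarrow> x = y) \<and>
       (\<forall>x\<in>M. \<forall>y\<in>M. \<forall>w\<in>M. le x y \<and> le y w \<longrightarrow> le x w) \<and>
       (\<forall>x\<in>M. \<forall>y\<in>M. le x y \<or> le y x) \<and>
       \<comment> \<open>compatible with multiplication (so M is a bipotent semiring with + = max)\<close>
       (\<forall>x\<in>M. \<forall>y\<in>M. \<forall>w\<in>M. le x y \<longrightarrow> le (m x w) (m y w) \<and> le (m w x) (m w y)) \<and>
       \<comment> \<open>0 is least\<close>
       (\<forall>x\<in>M. le z x))"

definition transmission ::
  "('a, 'c) stmonoid_scheme \<Rightarrow> ('b, 'd) stmonoid_scheme \<Rightarrow> ('a \<Rightarrow> 'b) \<Rightarrow> bool" where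
  "transmission U V \<alpha> \<longleftrightarrow>
     (\<forall>x\<in>st_carrier U. \<alpha> x \<in> st_carrier V) \<and>
     \<alpha> (st_zero U) = st_zero V \<and> \<alpha> (st_one U) = st_one V \<and>
     (\<forall>x\<in>st_carrier U. \<forall>y\<in>st_carrier U. \<alpha> (st_mul U x y) = st_mul V (\<alpha> x) (\<alpha> y)) \<and>
     \<alpha> (st_e U) = st_e V \<and>
     (\<forall>x\<in>ghost_set U. \<forall>y\<in>ghost_set U. st_le U x y \<longrightarrow> st_le V (\<alpha> x) (\<alpha> y))"

definition TE_relation :: "('a, 'b) stmonoid_scheme \<Rightarrow> ('a \<times> 'a) set \<Rightarrow> bool" where
  "TE_relation U E \<longleftrightarrow>
     equiv (st_carrier U) E \<and>
     (\<forall>x\<in>st_carrier U. \<forall>y\<in>st_carrier U. \<forall>z\<in>st_carrier U.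
        (x, y) \<in> E \<longrightarrow> (st_mul U x z, st_mul U y z) \<in> E \<and> (st_mul U z x, st_mul U z y) \<in> E) \<and>
     (\<forall>x1\<in>ghost_set U. \<forall>x2\<in>ghost_set U. \<forall>x3\<in>ghost_set U. \<forall>x4\<in>ghost_set U.
        st_le U x1 x2 \<and> st_le U x3 x4 \<and> (x1, x4) \<in> E \<and> (x2, x3) \<in> E \<longrightarrow> (x1, x2) \<in> E) \<and>
     (\<forall>x\<in>st_carrier U. (st_mul U (st_e U) x, st_zero U) \<in> E \<longrightarrow> (x, st_zero U) \<in> E)"

definition same_st_structure :: "('a, 'b) stmonoid_scheme \<Rightarrow> ('a, 'c) stmonoid_scheme \<Rightarrow> bool" where
  "same_st_structure V W \<longleftrightarrow>
     st_carrier V = st_carrier W \<and>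
     (\<forall>x\<in>st_carrier V. \<forall>y\<in>st_carrier V. st_mul V x y = st_mul W x y) \<and>
     st_one V = st_one W \<and> st_zero V = st_zero W \<and> st_e V = st_e W \<and>
     ghost_set V = ghost_set W \<and>
     (\<forall>x\<in>ghost_set V. \<forall>y\<in>ghost_set V. st_le V x y \<longleftrightarrow> st_le W x y)"

end

theory Submission
  imports Defs
begin

text \<open>Multiplication descends to classes because E is multiplicative. On the classes of the
  ghost ideal M we order [a] \<le> [b] iff [a] = [b] or a \<le> b. TE2, which in particular makes
  every class meet M in an order-convex set, is exactly what makes this relation well defined,
  transitive and antisymmetric, so U/E becomes supertropical and the class map a transmission.
  Uniqueness: a transmission fixes the multiplication, the constants and the ghost ideal of
  U/E, and forces [a] \<le> [b] whenever a \<le> b; by totality of the order on M and antisymmetry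
  on U/E this determines the order completely.\<close>

locale supertropical =
  fixes U :: "'a stmonoid"
  assumes supertropical: "supertropical_monoid U"
begin

abbreviation carr :: "'a set" where "carr \<equiv> st_carrier U"
abbreviation mult :: "'a \<Rightarrow> 'a \<Rightarrow> 'a" (infixl "\<cdot>" 70) where "x \<cdot> y \<equiv> st_mul U x y"
abbreviation e :: 'a where "e \<equiv> st_e U"
abbreviation le :: "'a \<Rightarrow> 'a \<Rightarrow> bool" (infix "\<preceq>" 50) where "x \<preceq> y \<equiv> st_le U x y"
abbreviation M :: "'a set" where "M \<equiv> ghost_set U"

lemmas axioms_unfolded = supertropical[unfolded supertropical_monoid_def Let_def]

lemma one_closed: "st_one U \<in> carr"
  and zero_closed: "st_zero U \<in> carr"
  and e_closed: "e \<in> carr"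
  and mult_closed: "x \<in> carr \<Longrightarrow> y \<in> carr \<Longrightarrow> x \<cdot> y \<in> carr"
  and mult_assoc: "x \<in> carr \<Longrightarrow> y \<in> carr \<Longrightarrow> w \<in> carr \<Longrightarrow> x \<cdot> y \<cdot> w = x \<cdot> (y \<cdot> w)"
  and mult_one_left: "x \<in> carr \<Longrightarrow> st_one U \<cdot> x = x"
  and mult_one_right: "x \<in> carr \<Longrightarrow> x \<cdot> st_one U = x"
  and mult_zero_left: "x \<in> carr \<Longrightarrow> st_zero U \<cdot> x = st_zero U"
  and mult_zero_right: "x \<in> carr \<Longrightarrow> x \<cdot> st_zero U = st_zero U"
  and e_central: "x \<in> carr \<Longrightarrow> e \<cdot> x = x \<cdot> e"
  and e_idem: "e \<cdot> e = e"
  using axioms_unfolded by simp_all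

lemma le_antisym: "x \<in> M \<Longrightarrow> y \<in> M \<Longrightarrow> x \<preceq> y \<Longrightarrow> y \<preceq> x \<Longrightarrow> x = y"
  and le_trans: "x \<in> M \<Longrightarrow> y \<in> M \<Longrightarrow> w \<in> M \<Longrightarrow> x \<preceq> y \<Longrightarrow> y \<preceq> w \<Longrightarrow> x \<preceq> w"
  and le_total: "x \<in> M \<Longrightarrow> y \<in> M \<Longrightarrow> x \<preceq> y \<or> y \<preceq> x"
  and mult_le_mono: "x \<in> M \<Longrightarrow> y \<in> M \<Longrightarrow> w \<in> M \<Longrightarrow> x \<preceq> y \<Longrightarrow> x \<cdot> w \<preceq> y \<cdot> w \<and> w \<cdot> x \<preceq> w \<cdot> y"
  and zero_le: "x \<in> M \<Longrightarrow> st_zero U \<preceq> x"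
  using axioms_unfolded by blast+

lemma ghost_set_iff: "x \<in> M \<longleftrightarrow> (\<exists>y\<in>carr. x = e \<cdot> y)"
  unfolding ghost_set_def by blast

lemma ghost_subset: "x \<in> M \<Longrightarrow> x \<in> carr"
  using ghost_set_iff mult_closed e_closed by auto

lemma e_mult_in_ghost: "x \<in> carr \<Longrightarrow> e \<cdot> x \<in> M"
  using ghost_set_iff by blast

lemma e_mult_ghost: "x \<in> M \<Longrightarrow> e \<cdot> x = x"
  using ghost_set_iff mult_assoc e_closed e_idem by metis

lemma zero_in_ghost: "st_zero U \<in> M"
  using e_mult_in_ghost[OF zero_closed] mult_zero_right[OF e_closed] by simp

lemma ghost_mult_closed:
  assumes "x \<in> M" "y \<in> M"
  shows "x \<cdot> y \<in> M"
proof -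
  have "x \<cdot> y = e \<cdot> (x \<cdot> y)"
    using assms e_mult_ghost mult_assoc ghost_subset e_closed by metis
  then show ?thesis
    using e_mult_in_ghost mult_closed ghost_subset assms by metis
qed

end

locale TE_quotient = supertropical +
  fixes E :: "('a \<times> 'a) set"
  assumes TE: "TE_relation U E"
begin

abbreviation cls :: "'a \<Rightarrow> 'a set" where "cls x \<equiv> E `` {x}"

lemma equiv: "equiv carr E"
  and mult_cong: "x \<in> carr \<Longrightarrow> y \<in> carr \<Longrightarrow> z \<in> carr \<Longrightarrow> (x, y) \<in> E \<Longrightarrow>
    (x \<cdot> z, y \<cdot> z) \<in> E \<and> (z \<cdot> x, z \<cdot> y) \<in> E"
  and order_compatible: "x1 \<in> M \<Longrightarrow> x2 \<in> M \<Longrightarrow> x3 \<in> M \<Longrightarrow> x4 \<in> M \<Longrightarrow>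
    x1 \<preceq> x2 \<Longrightarrow> x3 \<preceq> x4 \<Longrightarrow> (x1, x4) \<in> E \<Longrightarrow> (x2, x3) \<in> E \<Longrightarrow> (x1, x2) \<in> E"
  and e_mult_equiv_zero: "x \<in> carr \<Longrightarrow> (e \<cdot> x, st_zero U) \<in> E \<Longrightarrow> (x, st_zero U) \<in> E"
  using TE unfolding TE_relation_def by blast+

lemma equiv_sym: "(x, y) \<in> E \<Longrightarrow> (y, x) \<in> E"
  using equiv unfolding equiv_def by (meson symE)

lemma equiv_trans: "(x, y) \<in> E \<Longrightarrow> (y, z) \<in> E \<Longrightarrow> (x, z) \<in> E"
  using equiv unfolding equiv_def by (meson transE)

lemma cls_eq_iff: "x \<in> carr \<Longrightarrow> y \<in> carr \<Longrightarrow> cls x = cls y \<longleftrightarrow> (x, y) \<in> E"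
  using equiv by (simp add: eq_equiv_class_iff)

lemma cls_in_quotient: "x \<in> carr \<Longrightarrow> cls x \<in> carr // E"
  by (rule quotientI)

lemma ball_quotient: "(\<forall>X\<in>carr // E. P X) \<longleftrightarrow> (\<forall>x\<in>carr. P (cls x))"
  by (metis quotientE quotientI)

lemma ghost_class_convex:
  assumes "x \<in> M" "y \<in> M" "z \<in> M" "x \<preceq> y" "y \<preceq> z" "(x, z) \<in> E"
  shows "(x, y) \<in> E"
  using order_compatible[of x y y z] assms equiv ghost_subset
  unfolding equiv_def refl_on_def by blast

definition le_mod :: "'a \<Rightarrow> 'a \<Rightarrow> bool" where
  "le_mod x y \<longleftrightarrow> (x, y) \<in> E \<or> x \<preceq> y"

lemma le_mod_trans:
  assumes M: "a \<in> M" "b \<in> M" "c \<in> M" and ab: "le_mod a b" and bc: "le_mod b c"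
  shows "le_mod a c"
proof (cases "a \<preceq> c")
  case False
  then have ca: "c \<preceq> a" using le_total M by blast
  from ab bc consider "a \<preceq> b" "b \<preceq> c" | "a \<preceq> b" "(b, c) \<in> E" | "(a, b) \<in> E" "b \<preceq> c"
    | "(a, b) \<in> E" "(b, c) \<in> E"
    unfolding le_mod_def by blast
  then show ?thesis
  proof cases
    case 1
    then show ?thesis using le_trans M le_mod_def by blast
  next
    case 2
    then have "(c, a) \<in> E" using ghost_class_convex[of c a b] M ca equiv_sym by blast
    then show ?thesis using equiv_sym le_mod_def by blast
  next
    case 3
    then have "(b, c) \<in> E" using ghost_class_convex[of b c a] M ca equiv_sym by blast
    then show ?thesis using equiv_trans 3 le_mod_def by blast
  next
    case 4
    then show ?thesis using equiv_trans le_mod_def by blast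
  qed
qed (simp add: le_mod_def)

lemma le_mod_mult:
  assumes M: "a \<in> M" "b \<in> M" "c \<in> M" and ab: "le_mod a b"
  shows "le_mod (a \<cdot> c) (b \<cdot> c) \<and> le_mod (c \<cdot> a) (c \<cdot> b)"
  using ab mult_cong[of a b c] mult_le_mono[OF M] M ghost_subset
  unfolding le_mod_def by blast

definition quot_mult :: "'a set \<Rightarrow> 'a set \<Rightarrow> 'a set" where
  "quot_mult A B = cls ((SOME a. a \<in> A) \<cdot> (SOME b. b \<in> B))"

lemma some_in_cls:
  assumes "x \<in> carr"
  shows "(SOME a. a \<in> cls x) \<in> carr \<and> ((SOME a. a \<in> cls x), x) \<in> E"
proof -
  have "(SOME a. a \<in> cls x) \<in> cls x"
    using equiv_class_self[OF equiv assms] by (rule someI)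
  then show ?thesis
    using equiv_type[OF equiv] equiv_sym by blast
qed

lemma quot_mult_cls:
  assumes x: "x \<in> carr" and y: "y \<in> carr"
  shows "quot_mult (cls x) (cls y) = cls (x \<cdot> y)"
proof -
  define a where "a = (SOME a. a \<in> cls x)"
  define b where "b = (SOME b. b \<in> cls y)"
  have a: "a \<in> carr" "(a, x) \<in> E" and b: "b \<in> carr" "(b, y) \<in> E"
    using some_in_cls[OF x] some_in_cls[OF y] unfolding a_def b_def by auto
  have "(a \<cdot> b, x \<cdot> b) \<in> E" "(x \<cdot> b, x \<cdot> y) \<in> E"
    using mult_cong a b x y by blast+
  then have "(a \<cdot> b, x \<cdot> y) \<in> E" by (rule equiv_trans)
  then show ?thesis
    unfolding quot_mult_def a_def[symmetric] b_def[symmetric]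
    using cls_eq_iff mult_closed a b x y by blast
qed

definition quot_le :: "'a set \<Rightarrow> 'a set \<Rightarrow> bool" where
  "quot_le A B \<longleftrightarrow> A = B \<or> (\<exists>a\<in>M. \<exists>b\<in>M. A = cls a \<and> B = cls b \<and> a \<preceq> b)"

lemma quot_le_cls:
  assumes M: "a \<in> M" "b \<in> M"
  shows "quot_le (cls a) (cls b) \<longleftrightarrow> le_mod a b"
proof
  assume "quot_le (cls a) (cls b)"
  then consider "cls a = cls b"
    | a' b' where "a' \<in> M" "b' \<in> M" "(a', a) \<in> E" "(b', b) \<in> E" "a' \<preceq> b'"
    unfolding quot_le_def using cls_eq_iff ghost_subset M by metis
  then show "le_mod a b"
  proof cases
    case 1
    then show ?thesis using cls_eq_iff ghost_subset M le_mod_def by blast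
  next
    case (2 a' b')
    show ?thesis
    proof (cases "a \<preceq> b")
      case False
      then have "b \<preceq> a" using le_total M by blast
      then have "(a', b') \<in> E" using order_compatible[of a' b' b a] 2 M by blast
      then show ?thesis using 2 equiv_sym equiv_trans le_mod_def by blast
    qed (simp add: le_mod_def)
  qed
next
  assume "le_mod a b"
  then show "quot_le (cls a) (cls b)"
    unfolding quot_le_def le_mod_def using cls_eq_iff ghost_subset M by blast
qed

definition quotient_stmonoid :: "'a set stmonoid" where
  "quotient_stmonoid = \<lparr>st_carrier = carr // E, st_mul = quot_mult, st_one = cls (st_one U),
     st_zero = cls (st_zero U), st_e = cls e, st_le = quot_le\<rparr>"

lemma ghost_set_of_transmission:
  assumes "st_carrier W = carr // E" and "transmission U W cls"
  shows "ghost_set W = cls ` M"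
proof -
  have W: "st_e W = cls e" "\<And>x y. x \<in> carr \<Longrightarrow> y \<in> carr \<Longrightarrow> st_mul W (cls x) (cls y) = cls (x \<cdot> y)"
    using assms(2) unfolding transmission_def by auto
  have "ghost_set W = {st_mul W (cls e) X | X. X \<in> carr // E}"
    unfolding ghost_set_def assms(1) W(1) ..
  also have "\<dots> = {cls (e \<cdot> x) | x. x \<in> carr}"
    using W(2) e_closed by (auto elim!: quotientE intro: quotientI)
  also have "\<dots> = cls ` M"
    unfolding ghost_set_def by blast
  finally show ?thesis .
qed

lemma transmission_quotient: "transmission U quotient_stmonoid cls"
  unfolding transmission_def quotient_stmonoid_def
  using cls_in_quotient quot_mult_cls by (auto simp: quot_le_def ghost_set_iff)

lemma ghost_set_quotient: "ghost_set quotient_stmonoid = cls ` M"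
  using ghost_set_of_transmission[OF _ transmission_quotient]
  by (simp add: quotient_stmonoid_def)

lemma ball_ghost_classes: "(\<forall>X\<in>cls ` M. P X) \<longleftrightarrow> (\<forall>x\<in>M. P (cls x))"
  by blast

lemma supertropical_quotient: "supertropical_monoid quotient_stmonoid"
proof -
  have Q: "st_carrier quotient_stmonoid = carr // E" "st_mul quotient_stmonoid = quot_mult"
    "st_one quotient_stmonoid = cls (st_one U)" "st_zero quotient_stmonoid = cls (st_zero U)"
    "st_e quotient_stmonoid = cls e" "st_le quotient_stmonoid = quot_le"
    by (simp_all add: quotient_stmonoid_def)
  have cls_eq_le_mod: "cls a = cls b \<longleftrightarrow> le_mod a b \<and> le_mod b a" if "a \<in> M" "b \<in> M" for a b
    using that le_antisym cls_eq_iff ghost_subset equiv_sym unfolding le_mod_def by metis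
  have e_cancel: "(x, st_zero U) \<in> E"
    if "x \<in> carr" "cls (e \<cdot> x) = cls (st_zero U)" for x
    using that e_closed cls_eq_iff mult_closed zero_closed e_mult_equiv_zero by metis
  show ?thesis
    unfolding supertropical_monoid_def Let_def ghost_set_quotient Q ball_ghost_classes
      ball_quotient
  proof (intro conjI)
    show "\<forall>x\<in>M. quot_le (cls x) (cls x)"
      by (simp add: quot_le_def)
    show "\<forall>x\<in>M. \<forall>y\<in>M. quot_le (cls x) (cls y) \<and> quot_le (cls y) (cls x) \<longrightarrow> cls x = cls y"
      by (simp add: quot_le_cls cls_eq_le_mod)
    show "\<forall>x\<in>M. \<forall>y\<in>M. \<forall>w\<in>M.
        quot_le (cls x) (cls y) \<and> quot_le (cls y) (cls w) \<longrightarrow> quot_le (cls x) (cls w)"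
      by (simp add: quot_le_cls) (blast intro: le_mod_trans)
    show "\<forall>x\<in>M. \<forall>y\<in>M. quot_le (cls x) (cls y) \<or> quot_le (cls y) (cls x)"
      using le_total by (auto simp: quot_le_cls le_mod_def)
    show "\<forall>x\<in>M. \<forall>y\<in>M. \<forall>w\<in>M. quot_le (cls x) (cls y) \<longrightarrow>
        quot_le (quot_mult (cls x) (cls w)) (quot_mult (cls y) (cls w)) \<and>
        quot_le (quot_mult (cls w) (cls x)) (quot_mult (cls w) (cls y))"
      using le_mod_mult
      by (simp add: quot_le_cls quot_mult_cls ghost_subset ghost_mult_closed)
    show "\<forall>x\<in>M. quot_le (cls (st_zero U)) (cls x)"
      using zero_le by (simp add: quot_le_cls zero_in_ghost le_mod_def)
    show "\<forall>x\<in>carr. quot_mult (cls e) (cls x) = cls (st_zero U) \<longrightarrow> cls x = cls (st_zero U)"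
      using e_cancel by (simp add: quot_mult_cls e_closed cls_eq_iff zero_closed)
    show "\<forall>x\<in>carr. quot_mult (cls e) (cls x) = quot_mult (cls x) (cls e)"
      using e_central by (simp add: quot_mult_cls e_closed)
  qed (simp_all add: quot_mult_cls cls_in_quotient one_closed zero_closed e_closed mult_closed
         mult_assoc mult_one_left mult_one_right mult_zero_left mult_zero_right e_idem)
qed

lemma transmission_le_cls:
  assumes W: "st_carrier W = carr // E" "supertropical_monoid W" "transmission U W cls"
    and M: "a \<in> M" "b \<in> M"
  shows "st_le W (cls a) (cls b) \<longleftrightarrow> le_mod a b"
proof -
  have "cls a \<in> ghost_set W" "cls b \<in> ghost_set W"
    using ghost_set_of_transmission[OF W(1,3)] M by auto
  then have W_refl: "st_le W (cls a) (cls a)"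
    and W_antisym: "st_le W (cls a) (cls b) \<Longrightarrow> st_le W (cls b) (cls a) \<Longrightarrow> cls a = cls b"
    using W(2) unfolding supertropical_monoid_def Let_def by blast+
  have mono: "x \<preceq> y \<Longrightarrow> st_le W (cls x) (cls y)" if "x \<in> M" "y \<in> M" for x y
    using W(3) that unfolding transmission_def by blast
  show ?thesis
    using le_total[OF M] mono[OF M] mono[OF M(2,1)] W_refl W_antisym cls_eq_iff ghost_subset M
    unfolding le_mod_def by metis
qed

lemma quotient_unique:
  assumes W: "st_carrier W = carr // E" "supertropical_monoid W" "transmission U W cls"
  shows "same_st_structure quotient_stmonoid W"
proof -
  have hom: "st_e W = cls e" "st_one W = cls (st_one U)" "st_zero W = cls (st_zero U)"
    "\<And>x y. x \<in> carr \<Longrightarrow> y \<in> carr \<Longrightarrow> st_mul W (cls x) (cls y) = cls (x \<cdot> y)"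
    using W(3) unfolding transmission_def by auto
  show ?thesis
    unfolding same_st_structure_def ghost_set_quotient ghost_set_of_transmission[OF W(1,3)]
      ball_ghost_classes ball_quotient W(1)
    by (simp add: quotient_stmonoid_def ball_quotient hom quot_mult_cls quot_le_cls transmission_le_cls[OF W])
qed

end

theorem theorem1p7:
  fixes U :: "'a stmonoid" and E :: "('a \<times> 'a) set"
  assumes "supertropical_monoid U"
    and "TE_relation U E"
  shows "\<exists>V :: 'a set stmonoid.
           st_carrier V = st_carrier U // E \<and> supertropical_monoid V \<and>
           transmission U V (\<lambda>x. E `` {x}) \<and>
           (\<forall>W :: 'a set stmonoid.
              st_carrier W = st_carrier U // E \<and> supertropical_monoid W \<and>
              transmission U W (\<lambda>x. E `` {x}) \<longrightarrow> same_st_structure V W)"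
proof -
  interpret TE_quotient U E
    using assms by unfold_locales
  show ?thesis
  proof (intro exI[of _ quotient_stmonoid] conjI allI impI)
    show "st_carrier quotient_stmonoid = st_carrier U // E"
      by (simp add: quotient_stmonoid_def)
  qed (auto intro: supertropical_quotient transmission_quotient quotient_unique)
qed

end
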